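(* Let $V=V_1\oplus V_2\oplus V_4$ and $R=\mathcal{O}(V)^{\mathrm{SL}_2(\mathbb{C})}$. Then $R$ has no homogeneous system of parameters with degrees $2,2,3,3,3,4,5$; indeed, all invariants of degrees $2$ up to $5$ vanish at $(x,0,4xy^3)$, which is not in the nullcone of $V$.
   Context: $V_k$ is the $\mathrm{SL}_2(\mathbb{C})$-module of complex binary forms of degree $k$ in $x,y$; $R$ is the graded algebra of invariant polynomial functions on $V$. A homogeneous system of parameters is a set of algebraically independent homogeneous elements of positive degree over whose generated subalgebra $R$ is integral. The nullcone of $V$ is the set of points of $V$ at which all homogeneous invariants of positive degree vanish. *)

theory Defs
  imports Complex_Main
begin

text \<open>Points of V = V_1 + V_2 + V_4 are coordinate vectors v :: nat => complex, of which
 only the indices 0..9 matter: v 0, v 1 are the coefficients of the linear form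
 v0 x + v1 y; v 2, v 3, v 4 those of the quadratic form (coefficient of x^(2-j) y^j is v (2+j));
 v 5 .. v 9 those of the quartic form (coefficient of x^(4-j) y^j is v (5+j)).\<close>

definition binform :: "nat \<Rightarrow> (nat \<Rightarrow> complex) \<Rightarrow> complex \<Rightarrow> complex \<Rightarrow> complex" where
  "binform k a x y = (\<Sum>j\<le>k. a j * x ^ (k - j) * y ^ j)"

definition form1 :: "(nat \<Rightarrow> complex) \<Rightarrow> complex \<Rightarrow> complex \<Rightarrow> complex" where
  "form1 v = binform 1 (\<lambda>j. v j)"
definition form2 :: "(nat \<Rightarrow> complex) \<Rightarrow> complex \<Rightarrow> complex \<Rightarrow> complex" where
  "form2 v = binform 2 (\<lambda>j. v (2 + j))"
definition form4 :: "(nat \<Rightarrow> complex) \<Rightarrow> complex \<Rightarrow> complex \<Rightarrow> complex" where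
  "form4 v = binform 4 (\<lambda>j. v (5 + j))"

text \<open>SL_2(C): matrices (a,b,c,d) = [[a,b],[c,d]] with determinant 1. The action on binary
 forms is by linear substitution of the variables: w = g.v iff each form of w is the
 corresponding form of v precomposed with g.\<close>

definition SL2 :: "(complex \<times> complex \<times> complex \<times> complex) set" where
  "SL2 = {(a, b, c, d). a * d - b * c = 1}"

definition act_rel :: "complex \<times> complex \<times> complex \<times> complex \<Rightarrow> (nat \<Rightarrow> complex) \<Rightarrow> (nat \<Rightarrow> complex) \<Rightarrow> bool" where
  "act_rel g v w = (case g of (a, b, c, d) \<Rightarrow>
     (\<forall>x y. form1 w x y = form1 v (a * x + b * y) (c * x + d * y)
          \<and> form2 w x y = form2 v (a * x + b * y) (c * x + d * y)
          \<and> form4 w x y = form4 v (a * x + b * y) (c * x + d * y)))"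

definition mono_sum :: "nat \<Rightarrow> (nat \<Rightarrow> nat) set \<Rightarrow> ((nat \<Rightarrow> nat) \<Rightarrow> complex) \<Rightarrow> (nat \<Rightarrow> complex) \<Rightarrow> complex" where
  "mono_sum n A c v = (\<Sum>\<alpha>\<in>A. c \<alpha> * (\<Prod>i<n. v i ^ \<alpha> i))"

definition poly_fun :: "nat \<Rightarrow> ((nat \<Rightarrow> complex) \<Rightarrow> complex) set" where
  "poly_fun n = {f. \<exists>A c. finite A \<and> (\<forall>\<alpha>\<in>A. \<forall>i\<ge>n. \<alpha> i = 0) \<and> f = mono_sum n A c}"

definition homog_poly :: "nat \<Rightarrow> nat \<Rightarrow> ((nat \<Rightarrow> complex) \<Rightarrow> complex) \<Rightarrow> bool" where
  "homog_poly n d f = (\<exists>A c. finite A \<and> (\<forall>\<alpha>\<in>A. (\<forall>i\<ge>n. \<alpha> i = 0) \<and> (\<Sum>i<n. \<alpha> i) = d)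
                          \<and> f = mono_sum n A c)"

definition inv_ring :: "((nat \<Rightarrow> complex) \<Rightarrow> complex) set" where
  "inv_ring = {f \<in> poly_fun 10. \<forall>g\<in>SL2. \<forall>v w. act_rel g v w \<longrightarrow> f w = f v}"

definition poly_comp :: "((nat \<Rightarrow> complex) \<Rightarrow> complex) list \<Rightarrow> (nat \<Rightarrow> nat) set
     \<Rightarrow> ((nat \<Rightarrow> nat) \<Rightarrow> complex) \<Rightarrow> (nat \<Rightarrow> complex) \<Rightarrow> complex" where
  "poly_comp fs A c v = (\<Sum>\<alpha>\<in>A. c \<alpha> * (\<Prod>i<length fs. (fs ! i) v ^ \<alpha> i))"

definition alg_indep :: "((nat \<Rightarrow> complex) \<Rightarrow> complex) list \<Rightarrow> bool" where
  "alg_indep fs = (\<forall>A c. finite A \<and> (\<forall>\<alpha>\<in>A. \<forall>i\<ge>length fs. \<alpha> i = 0)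
        \<and> (\<forall>v. poly_comp fs A c v = 0) \<longrightarrow> (\<forall>\<alpha>\<in>A. c \<alpha> = 0))"

definition gen_alg :: "((nat \<Rightarrow> complex) \<Rightarrow> complex) list \<Rightarrow> ((nat \<Rightarrow> complex) \<Rightarrow> complex) set" where
  "gen_alg fs = {poly_comp fs A c | A c. finite A}"

definition integral_over :: "((nat \<Rightarrow> complex) \<Rightarrow> complex) set \<Rightarrow> ((nat \<Rightarrow> complex) \<Rightarrow> complex) \<Rightarrow> bool" where
  "integral_over S f = (\<exists>n cs. (\<forall>j<n. cs j \<in> S) \<and> (\<forall>v. f v ^ n + (\<Sum>j<n. cs j v * f v ^ j) = 0))"

definition is_hsop :: "((nat \<Rightarrow> complex) \<Rightarrow> complex) list \<Rightarrow> bool" where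
  "is_hsop fs = ((\<forall>f\<in>set fs. f \<in> inv_ring \<and> (\<exists>d>0. homog_poly 10 d f))
      \<and> alg_indep fs \<and> (\<forall>f\<in>inv_ring. integral_over (gen_alg fs) f))"

definition nullcone :: "(nat \<Rightarrow> complex) set" where
  "nullcone = {v. \<forall>f\<in>inv_ring. \<forall>d>0. homog_poly 10 d f \<longrightarrow> f v = 0}"

text \<open>The point (x, 0, 4 x y^3) of V.\<close>

definition p0 :: "nat \<Rightarrow> complex" where
  "p0 = (\<lambda>i. if i = 0 then 1 else if i = 8 then 4 else 0)"

end

theory Submission
  imports Defs "HOL-Computational_Algebra.Fundamental_Theorem_Algebra"
begin

text \<open>
  Let \<open>f\<close> be an invariant of degree \<open>d\<close>. The torus element \<open>diag(t, 1/t)\<close> with \<open>t\<^sup>3 = 1\<close> moves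
  \<open>p0 = x + 4 x y\<^sup>3\<close> to \<open>t \<cdot> p0\<close>, so \<open>f(p0) = t\<^sup>d f(p0)\<close> and \<open>f(p0) = 0\<close> unless \<open>3\<close> divides \<open>d\<close>.
  For \<open>d = 3\<close> write \<open>L\<close> for the differential of \<open>f\<close> at the linear form \<open>x\<close>, restricted to
  quartic directions. Torus invariance makes \<open>s \<mapsto> f(x + s x y\<^sup>3)\<close> linear, so
  \<open>f(p0) = 4 L(x y\<^sup>3)\<close>; it also forces \<open>f(x + s y\<^sup>4) = 0\<close> (use a fifth root of unity), and
  applying \<open>y \<mapsto> c x + y\<close> gives \<open>L((c x + y)\<^sup>4) = 0\<close> for all \<open>c\<close>, whose coefficient of \<open>c\<close> is
  \<open>4 L(x y\<^sup>3)\<close>.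

  On the other hand the discriminant \<open>\<Delta>\<close> of a quadratic covariant of the linear and the
  quartic form is an invariant of degree 6 with \<open>\<Delta>(p0) \<noteq> 0\<close>. The elements of a system of
  parameters of degrees \<open>2,2,3,3,3,4,5\<close> would all vanish on the line through \<open>p0\<close>; the
  coefficients of an integral equation for \<open>\<Delta>\<close> would then be constant on that line, while
  \<open>\<Delta>\<close> takes every value there.
\<close>

lemma binform_coeff_eqD:
  assumes "\<forall>x y. binform k a x y = binform k b x y" and "j \<le> k"
  shows "a j = b j"
proof -
  define P where "P a = (\<Sum>i\<le>k. monom (a i) (k - i))" for a :: "nat \<Rightarrow> complex"
  have poly_P: "poly (P a) x = binform k a x 1" for a x
    by (simp add: P_def binform_def poly_sum poly_monom)
  have "poly (P a) = poly (P b)" using assms(1) by (auto simp: poly_P)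
  hence P_eq: "P a = P b" by (simp add: poly_eq_poly_eq_iff)
  have coeff_P: "coeff (P a) (k - j) = a j" for a
  proof -
    have "coeff (P a) (k - j) = (\<Sum>i\<le>k. if k - i = k - j then a i else 0)"
      by (simp add: P_def coeff_sum coeff_monom)
    also have "\<dots> = (\<Sum>i\<in>{j}. a i)"
      by (rule sum.mono_neutral_cong_right) (use assms(2) in auto)
    finally show ?thesis by simp
  qed
  show ?thesis using coeff_P[of a] coeff_P[of b] P_eq by simp
qed

lemma binform_1: "binform 1 a x y = a 0 * x + a 1 * y"
  by (simp add: binform_def)

lemma binform_2: "binform 2 a x y = a 0 * x^2 + a 1 * x * y + a 2 * y^2"
  by (simp add: binform_def eval_nat_numeral atMost_Suc algebra_simps)

lemma binform_4:
  "binform 4 a x y = a 0 * x^4 + a 1 * x^3 * y + a 2 * x^2 * y^2 + a 3 * x * y^3 + a 4 * y^4"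
  by (simp add: binform_def eval_nat_numeral atMost_Suc algebra_simps)

lemma act_rel_coords:
  assumes "act_rel (a,b,c,d) v w"
  shows "w 0 = a * v 0 + c * v 1" "w 1 = b * v 0 + d * v 1"
  "w 5 = a^4*v 5 + a^3*c*v 6 + a^2*c^2*v 7 + a*c^3*v 8 + c^4*v 9"
  "w 6 = 4*a^3*b*v 5 + a^3*d*v 6 + 3*a^2*b*c*v 6 + 2*a^2*c*d*v 7 + 2*a*b*c^2*v 7 + 3*a*c^2*d*v 8 + b*c^3*v 8 + 4*c^3*d*v 9"
  "w 7 = 6*a^2*b^2*v 5 + 3*a^2*b*d*v 6 + 3*a*b^2*c*v 6 + a^2*d^2*v 7 + 4*a*b*c*d*v 7 + b^2*c^2*v 7 + 3*a*c*d^2*v 8 + 3*b*c^2*d*v 8 + 6*c^2*d^2*v 9"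
  "w 8 = 4*a*b^3*v 5 + 3*a*b^2*d*v 6 + b^3*c*v 6 + 2*a*b*d^2*v 7 + 2*b^2*c*d*v 7 + a*d^3*v 8 + 3*b*c*d^2*v 8 + 4*c*d^3*v 9"
  "w 9 = b^4*v 5 + b^3*d*v 6 + b^2*d^2*v 7 + b*d^3*v 8 + d^4*v 9"
proof -
  define W1 where "W1 = (\<lambda>j::nat. if j = 0 then a * v 0 + c * v 1 else b * v 0 + d * v 1)"
  have lin: "\<forall>x y. binform 1 (\<lambda>j. w j) x y = binform 1 W1 x y"
  proof (intro allI)
    fix x y
    have "binform 1 (\<lambda>j. w j) x y = form1 v (a * x + b * y) (c * x + d * y)"
      using assms unfolding act_rel_def form1_def by auto
    also have "\<dots> = binform 1 W1 x y"
      unfolding form1_def binform_1 W1_def by (simp add: algebra_simps)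
    finally show "binform 1 (\<lambda>j. w j) x y = binform 1 W1 x y" .
  qed
  show "w 0 = a * v 0 + c * v 1" "w 1 = b * v 0 + d * v 1"
    using binform_coeff_eqD[OF lin, of 0] binform_coeff_eqD[OF lin, of 1] by (simp_all add: W1_def)
  define W4 where "W4 = (\<lambda>j::nat. if j = 0 then a^4*v 5 + a^3*c*v 6 + a^2*c^2*v 7 + a*c^3*v 8 + c^4*v 9
   else if j = 1 then 4*a^3*b*v 5 + a^3*d*v 6 + 3*a^2*b*c*v 6 + 2*a^2*c*d*v 7 + 2*a*b*c^2*v 7 + 3*a*c^2*d*v 8 + b*c^3*v 8 + 4*c^3*d*v 9
   else if j = 2 then 6*a^2*b^2*v 5 + 3*a^2*b*d*v 6 + 3*a*b^2*c*v 6 + a^2*d^2*v 7 + 4*a*b*c*d*v 7 + b^2*c^2*v 7 + 3*a*c*d^2*v 8 + 3*b*c^2*d*v 8 + 6*c^2*d^2*v 9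
   else if j = 3 then 4*a*b^3*v 5 + 3*a*b^2*d*v 6 + b^3*c*v 6 + 2*a*b*d^2*v 7 + 2*b^2*c*d*v 7 + a*d^3*v 8 + 3*b*c*d^2*v 8 + 4*c*d^3*v 9
   else b^4*v 5 + b^3*d*v 6 + b^2*d^2*v 7 + b*d^3*v 8 + d^4*v 9)"
  have quart: "\<forall>x y. binform 4 (\<lambda>j. w (5 + j)) x y = binform 4 W4 x y"
  proof (intro allI)
    fix x y
    have "binform 4 (\<lambda>j. w (5 + j)) x y = form4 v (a * x + b * y) (c * x + d * y)"
      using assms unfolding act_rel_def form4_def by auto
    also have "\<dots> = binform 4 W4 x y" unfolding form4_def binform_4 W4_def
      by (simp add: algebra_simps power2_eq_square power3_eq_cube power4_eq_xxxx)
    finally show "binform 4 (\<lambda>j. w (5 + j)) x y = binform 4 W4 x y" .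
  qed
  show "w 5 = a^4*v 5 + a^3*c*v 6 + a^2*c^2*v 7 + a*c^3*v 8 + c^4*v 9"
    "w 6 = 4*a^3*b*v 5 + a^3*d*v 6 + 3*a^2*b*c*v 6 + 2*a^2*c*d*v 7 + 2*a*b*c^2*v 7 + 3*a*c^2*d*v 8 + b*c^3*v 8 + 4*c^3*d*v 9"
    "w 7 = 6*a^2*b^2*v 5 + 3*a^2*b*d*v 6 + 3*a*b^2*c*v 6 + a^2*d^2*v 7 + 4*a*b*c*d*v 7 + b^2*c^2*v 7 + 3*a*c*d^2*v 8 + 3*b*c^2*d*v 8 + 6*c^2*d^2*v 9"
    "w 8 = 4*a*b^3*v 5 + 3*a*b^2*d*v 6 + b^3*c*v 6 + 2*a*b*d^2*v 7 + 2*b^2*c*d*v 7 + a*d^3*v 8 + 3*b*c*d^2*v 8 + 4*c*d^3*v 9"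
    "w 9 = b^4*v 5 + b^3*d*v 6 + b^2*d^2*v 7 + b*d^3*v 8 + d^4*v 9"
    using binform_coeff_eqD[OF quart, of 0] binform_coeff_eqD[OF quart, of 1]
      binform_coeff_eqD[OF quart, of 2] binform_coeff_eqD[OF quart, of 3]
      binform_coeff_eqD[OF quart, of 4]
    by (simp_all add: W4_def)
qed

lemma inv_ring_invariant:
  "f \<in> inv_ring \<Longrightarrow> a * d - b * c = 1 \<Longrightarrow> act_rel (a,b,c,d) v w \<Longrightarrow> f w = f v"
  unfolding inv_ring_def SL2_def by auto

lemma homog_poly_imp_poly_fun: "homog_poly n d f \<Longrightarrow> f \<in> poly_fun n"
  unfolding homog_poly_def poly_fun_def by blast

lemma homog_poly_var:
  assumes "i < n"
  shows "homog_poly n 1 (\<lambda>v. v i)"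
proof -
  let ?\<alpha> = "\<lambda>k::nat. if k = i then 1 else (0::nat)"
  have prod: "(\<Prod>k<n. v k ^ ?\<alpha> k) = v i" for v :: "nat \<Rightarrow> complex"
  proof -
    have "(\<Prod>k<n. v k ^ ?\<alpha> k) = (\<Prod>k\<in>{i}. v k ^ ?\<alpha> k)"
      by (rule prod.mono_neutral_cong_right) (use assms in auto)
    thus ?thesis by simp
  qed
  have deg: "(\<Sum>k<n. ?\<alpha> k) = 1"
  proof -
    have "(\<Sum>k<n. ?\<alpha> k) = (\<Sum>k\<in>{i}. ?\<alpha> k)"
      by (rule sum.mono_neutral_cong_right) (use assms in auto)
    thus ?thesis by simp
  qed
  show ?thesis unfolding homog_poly_def
    by (rule exI[of _ "{?\<alpha>}"], rule exI[of _ "\<lambda>_. 1"]) (use assms deg in \<open>auto simp: mono_sum_def prod\<close>)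
qed

lemma homog_poly_const_mult:
  assumes "homog_poly n d f"
  shows "homog_poly n d (\<lambda>v. k * f v)"
proof -
  obtain A c where "finite A" "\<forall>\<alpha>\<in>A. (\<forall>i\<ge>n. \<alpha> i = 0) \<and> (\<Sum>i<n. \<alpha> i) = d" "f = mono_sum n A c"
    using assms unfolding homog_poly_def by blast
  thus ?thesis unfolding homog_poly_def
    by (intro exI[of _ A] exI[of _ "\<lambda>\<alpha>. k * c \<alpha>"])
      (auto simp: mono_sum_def sum_distrib_left mult.assoc)
qed

lemma homog_poly_add:
  assumes "homog_poly n d f" "homog_poly n d g"
  shows "homog_poly n d (\<lambda>v. f v + g v)"
proof -
  obtain A c where A: "finite A" "\<forall>\<alpha>\<in>A. (\<forall>i\<ge>n. \<alpha> i = 0) \<and> (\<Sum>i<n. \<alpha> i) = d" "f = mono_sum n A c"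
    using assms(1) unfolding homog_poly_def by blast
  obtain B e where B: "finite B" "\<forall>\<alpha>\<in>B. (\<forall>i\<ge>n. \<alpha> i = 0) \<and> (\<Sum>i<n. \<alpha> i) = d" "g = mono_sum n B e"
    using assms(2) unfolding homog_poly_def by blast
  define ce where "ce \<alpha> = (if \<alpha> \<in> A then c \<alpha> else 0) + (if \<alpha> \<in> B then e \<alpha> else 0)" for \<alpha>
  have "mono_sum n A c v + mono_sum n B e v = mono_sum n (A \<union> B) ce v" for v
  proof -
    have "mono_sum n A c v = (\<Sum>\<alpha>\<in>A \<union> B. (if \<alpha> \<in> A then c \<alpha> else 0) * (\<Prod>i<n. v i ^ \<alpha> i))"
      unfolding mono_sum_def by (rule sum.mono_neutral_cong_left) (use A B in auto)
    moreover have "mono_sum n B e v = (\<Sum>\<alpha>\<in>A \<union> B. (if \<alpha> \<in> B then e \<alpha> else 0) * (\<Prod>i<n. v i ^ \<alpha> i))"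
      unfolding mono_sum_def by (rule sum.mono_neutral_cong_left) (use A B in auto)
    ultimately show ?thesis
      by (simp add: mono_sum_def ce_def sum.distrib[symmetric] distrib_right)
  qed
  thus ?thesis unfolding homog_poly_def using A B
    by (intro exI[of _ "A \<union> B"] exI[of _ ce]) auto
qed

lemma homog_poly_mult:
  assumes "homog_poly n d1 f" "homog_poly n d2 g" "d = d1 + d2"
  shows "homog_poly n d (\<lambda>v. f v * g v)"
proof -
  obtain A c where A: "finite A" "\<forall>\<alpha>\<in>A. (\<forall>i\<ge>n. \<alpha> i = 0) \<and> (\<Sum>i<n. \<alpha> i) = d1" "f = mono_sum n A c"
    using assms(1) unfolding homog_poly_def by blast
  obtain B e where B: "finite B" "\<forall>\<alpha>\<in>B. (\<forall>i\<ge>n. \<alpha> i = 0) \<and> (\<Sum>i<n. \<alpha> i) = d2" "g = mono_sum n B e"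
    using assms(2) unfolding homog_poly_def by blast
  define plus where "plus = (\<lambda>(\<alpha>::nat\<Rightarrow>nat, \<beta>::nat\<Rightarrow>nat). (\<lambda>i. \<alpha> i + \<beta> i))"
  define C where "C = plus ` (A \<times> B)"
  define cc where "cc \<gamma> = (\<Sum>p\<in>{p. p \<in> A \<times> B \<and> plus p = \<gamma>}. c (fst p) * e (snd p))" for \<gamma>
  have fin: "finite (A \<times> B)" using A B by auto
  have "mono_sum n A c v * mono_sum n B e v = mono_sum n C cc v" for v
  proof -
    let ?M = "\<lambda>\<gamma>. (\<Prod>i<n. v i ^ \<gamma> i)"
    have "mono_sum n A c v * mono_sum n B e v = (\<Sum>\<alpha>\<in>A. \<Sum>\<beta>\<in>B. (c \<alpha> * ?M \<alpha>) * (e \<beta> * ?M \<beta>))"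
      unfolding mono_sum_def by (rule sum_product)
    also have "\<dots> = (\<Sum>p\<in>A \<times> B. c (fst p) * e (snd p) * ?M (plus p))"
      unfolding sum.cartesian_product
      by (rule sum.cong) (auto simp: plus_def power_add prod.distrib)
    also have "\<dots> = (\<Sum>\<gamma>\<in>C. \<Sum>p\<in>{p. p \<in> A \<times> B \<and> plus p = \<gamma>}. c (fst p) * e (snd p) * ?M (plus p))"
      unfolding C_def by (rule sum.image_gen[OF fin])
    also have "\<dots> = (\<Sum>\<gamma>\<in>C. cc \<gamma> * ?M \<gamma>)"
      unfolding cc_def sum_distrib_right by (rule sum.cong) auto
    finally show ?thesis unfolding mono_sum_def .
  qed
  moreover have "finite C" using fin C_def by auto
  moreover have "\<forall>\<gamma>\<in>C. (\<forall>i\<ge>n. \<gamma> i = 0) \<and> (\<Sum>i<n. \<gamma> i) = d"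
    using A(2) B(2) assms(3) by (auto simp: C_def plus_def sum.distrib)
  ultimately show ?thesis unfolding homog_poly_def using A B
    by (intro exI[of _ C] exI[of _ cc]) auto
qed

lemma homog_poly_scale:
  assumes "homog_poly n d f"
  shows "f (\<lambda>i. t * v i) = t ^ d * f v"
proof -
  obtain A c where A: "finite A" "\<forall>\<alpha>\<in>A. (\<forall>i\<ge>n. \<alpha> i = 0) \<and> (\<Sum>i<n. \<alpha> i) = d" "f = mono_sum n A c"
    using assms unfolding homog_poly_def by blast
  have "(\<Prod>i<n. (t * v i) ^ \<alpha> i) = t ^ d * (\<Prod>i<n. v i ^ \<alpha> i)" if "\<alpha> \<in> A" for \<alpha>
    using A(2) that by (simp add: power_mult_distrib prod.distrib power_sum[symmetric])
  thus ?thesis unfolding A(3) mono_sum_def by (simp add: sum_distrib_left algebra_simps)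
qed

lemma prod_power_eq_sum_if_exponents_sum_1:
  fixes h :: "nat \<Rightarrow> complex"
  assumes "finite S" "(\<Sum>i\<in>S. \<alpha> i) = (1::nat)"
  shows "(\<Prod>i\<in>S. h i ^ \<alpha> i) = (\<Sum>i\<in>S. of_nat (\<alpha> i) * h i)"
proof -
  obtain k where k: "k \<in> S" "\<alpha> k \<noteq> 0"
    using assms(2) by (metis sum.neutral zero_neq_one)
  have "(\<Sum>i\<in>S. \<alpha> i) = \<alpha> k + (\<Sum>i\<in>S - {k}. \<alpha> i)"
    using k assms(1) by (simp add: sum.remove)
  hence "\<alpha> k = 1" and "(\<Sum>i\<in>S - {k}. \<alpha> i) = 0" using assms(2) k by auto
  hence others: "\<forall>i\<in>S - {k}. \<alpha> i = 0" using assms(1) by simp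
  have "(\<Prod>i\<in>S. h i ^ \<alpha> i) = (\<Prod>i\<in>{k}. h i ^ \<alpha> i)"
    by (rule prod.mono_neutral_cong_right) (use assms(1) k others in auto)
  moreover have "(\<Sum>i\<in>S. of_nat (\<alpha> i) * h i) = (\<Sum>i\<in>{k}. of_nat (\<alpha> i) * h i)"
    by (rule sum.mono_neutral_cong_right) (use assms(1) k others in auto)
  ultimately show ?thesis using \<open>\<alpha> k = 1\<close> by simp
qed

text \<open>The point \<open>x + s h\<close> of \<open>V\<close>; the coordinate \<open>h 0\<close> is ignored.\<close>

definition x_plus :: "(nat \<Rightarrow> complex) \<Rightarrow> complex \<Rightarrow> nat \<Rightarrow> complex" where
  "x_plus h s = (\<lambda>k. if k = 0 then 1 else s * h k)"

lemma poly_fun_along_x_plus: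
  assumes "f \<in> poly_fun n" "0 < n"
  obtains L where
    "\<And>h. \<exists>p. (\<forall>s. f (x_plus h s) = poly p s) \<and> coeff p 1 = (\<Sum>i\<in>{1..<n}. L i * h i)"
proof -
  obtain A c where A: "finite A" "\<forall>\<alpha>\<in>A. \<forall>i\<ge>n. \<alpha> i = 0" "f = mono_sum n A c"
    using assms(1) unfolding poly_fun_def by blast
  define m where "m \<alpha> = (\<Sum>i\<in>{1..<n}. \<alpha> i)" for \<alpha> :: "nat \<Rightarrow> nat"
  define L where "L i = (\<Sum>\<alpha>\<in>A. if m \<alpha> = 1 then c \<alpha> * of_nat (\<alpha> i) else 0)" for i
  have "\<exists>p. (\<forall>s. f (x_plus h s) = poly p s) \<and> coeff p 1 = (\<Sum>i\<in>{1..<n}. L i * h i)" for h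
  proof -
    define p where "p = (\<Sum>\<alpha>\<in>A. monom (c \<alpha> * (\<Prod>i\<in>{1..<n}. h i ^ \<alpha> i)) (m \<alpha>))"
    have "f (x_plus h s) = poly p s" for s
    proof -
      have "{..<n} = insert 0 {1..<n}" using assms(2) by auto
      hence "(\<Prod>i<n. x_plus h s i ^ \<alpha> i) = (\<Prod>i\<in>{1..<n}. s ^ \<alpha> i * h i ^ \<alpha> i)" for \<alpha>
        by (simp add: x_plus_def power_mult_distrib)
      hence "(\<Prod>i<n. x_plus h s i ^ \<alpha> i) = s ^ m \<alpha> * (\<Prod>i\<in>{1..<n}. h i ^ \<alpha> i)" for \<alpha>
        by (simp add: prod.distrib m_def power_sum)
      thus ?thesis unfolding A(3) mono_sum_def p_def
        by (simp add: poly_sum poly_monom algebra_simps)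
    qed
    moreover have "coeff p 1 = (\<Sum>i\<in>{1..<n}. L i * h i)"
    proof -
      have "coeff p 1 = (\<Sum>\<alpha>\<in>A. if m \<alpha> = 1 then c \<alpha> * (\<Prod>i\<in>{1..<n}. h i ^ \<alpha> i) else 0)"
        unfolding p_def coeff_sum coeff_monom by (rule refl)
      also have "\<dots> = (\<Sum>\<alpha>\<in>A. \<Sum>i\<in>{1..<n}. (if m \<alpha> = 1 then c \<alpha> * of_nat (\<alpha> i) else 0) * h i)"
        by (rule sum.cong[OF refl])
          (auto simp: prod_power_eq_sum_if_exponents_sum_1 m_def sum_distrib_left mult.assoc)
      also have "\<dots> = (\<Sum>i\<in>{1..<n}. L i * h i)"
        unfolding L_def sum_distrib_right by (rule sum.swap)
      finally show ?thesis .
    qed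
    ultimately show ?thesis by blast
  qed
  thus ?thesis using that by blast
qed

section \<open>Systems of parameters and the nullcone\<close>

lemma monic_poly_fun_not_identically_zero:
  fixes K :: "nat \<Rightarrow> 'a :: {idom, ring_char_0}"
  shows "\<exists>z. z ^ n + (\<Sum>j<n. K j * z ^ j) \<noteq> 0"
proof (rule ccontr)
  define P where "P = monom 1 n + (\<Sum>j<n. monom (K j) j)"
  assume "\<nexists>z. z ^ n + (\<Sum>j<n. K j * z ^ j) \<noteq> 0"
  hence "poly P z = 0" for z by (simp add: P_def poly_sum poly_monom)
  hence "P = 0" using poly_all_0_iff_0 by blast
  moreover have "coeff P n = 1" by (simp add: P_def coeff_sum coeff_monom)
  ultimately show False by simp
qed

text \<open>The common zeros of a system of parameters lie in the nullcone.\<close>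

lemma integral_over_gen_alg_vanishes:
  assumes fs: "\<forall>g\<in>set fs. \<exists>d>0. homog_poly n d g \<and> g v = 0"
    and f: "homog_poly m e f" "0 < e" "integral_over (gen_alg fs) f"
  shows "f v = 0"
proof (rule ccontr)
  assume "f v \<noteq> 0"
  have fs_ray: "(fs ! i) (\<lambda>k. t * v k) = 0" if "i < length fs" for i t
    using fs nth_mem[OF that] homog_poly_scale by fastforce
  obtain N cs where cs: "\<forall>j<N. cs j \<in> gen_alg fs" "\<forall>u. f u ^ N + (\<Sum>j<N. cs j u * f u ^ j) = 0"
    using f(3) unfolding integral_over_def by blast
  have cs_ray: "cs j (\<lambda>k. t * v k) = cs j (\<lambda>k. 0 * v k)" if "j < N" for j t
  proof -
    obtain A c where "cs j = poly_comp fs A c" using cs(1) \<open>j < N\<close> unfolding gen_alg_def by blast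
    thus ?thesis by (simp add: poly_comp_def fs_ray fs_ray[where t = 0, simplified])
  qed
  have "z ^ N + (\<Sum>j<N. cs j (\<lambda>k. 0 * v k) * z ^ j) = 0" for z
  proof -
    obtain t where "t ^ e = z / f v" using nth_root_exists f(2) by blast
    hence "f (\<lambda>k. t * v k) = z" using homog_poly_scale[OF f(1)] \<open>f v \<noteq> 0\<close> by simp
    thus ?thesis using cs(2)[rule_format, of "\<lambda>k. t * v k"] cs_ray by simp
  qed
  thus False using monic_poly_fun_not_identically_zero[of N "\<lambda>j. cs j (\<lambda>k. 0 * v k)"] by blast
qed

section \<open>A sextic invariant not vanishing at p0\<close>

text \<open>\<open>cov0 x\<^sup>2 + cov1 x y + cov2 y\<^sup>2\<close> is a joint covariant of the linear and the quartic form: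
  its coefficients transform like those of a binary quadratic, up to the factor \<open>det\<^sup>2\<close>.\<close>

definition cov0 :: "(nat \<Rightarrow> complex) \<Rightarrow> complex" where
  "cov0 v = 12 * v 1^2 * v 5 - 6 * v 0 * v 1 * v 6 + 2 * v 0^2 * v 7"
definition cov1 :: "(nat \<Rightarrow> complex) \<Rightarrow> complex" where
  "cov1 v = 6 * v 1^2 * v 6 - 8 * v 0 * v 1 * v 7 + 6 * v 0^2 * v 8"
definition cov2 :: "(nat \<Rightarrow> complex) \<Rightarrow> complex" where
  "cov2 v = 2 * v 1^2 * v 7 - 6 * v 0 * v 1 * v 8 + 12 * v 0^2 * v 9"

definition Delta :: "(nat \<Rightarrow> complex) \<Rightarrow> complex" where
  "Delta v = cov1 v ^ 2 - 4 * cov0 v * cov2 v"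

lemma Delta_invariant:
  assumes "act_rel (a,b,c,d) v w" "a * d - b * c = 1"
  shows "Delta w = Delta v"
proof -
  note W = act_rel_coords[OF assms(1)]
  have cov0_w: "cov0 w = (a*d-b*c)^2 * (cov0 v * a^2 + cov1 v * a * c + cov2 v * c^2)"
    unfolding cov0_def cov1_def cov2_def W by algebra
  have cov1_w: "cov1 w = (a*d-b*c)^2 * (2 * cov0 v * a * b + cov1 v * (a * d + b * c) + 2 * cov2 v * c * d)"
    unfolding cov0_def cov1_def cov2_def W by algebra
  have cov2_w: "cov2 w = (a*d-b*c)^2 * (cov0 v * b^2 + cov1 v * b * d + cov2 v * d^2)"
    unfolding cov0_def cov1_def cov2_def W by algebra
  have "Delta w = (a*d-b*c)^6 * Delta v"
    unfolding Delta_def cov0_w cov1_w cov2_w by algebra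
  thus ?thesis using assms(2) by simp
qed

lemma homog_poly_Delta: "homog_poly 10 6 Delta"
proof -
  have var: "homog_poly 10 1 (\<lambda>v. v i)" if "i < 10" for i using homog_poly_var that .
  have cubic: "homog_poly 10 3 (\<lambda>v. k * (v i * (v j * v l)))"
    if "i < 10" "j < 10" "l < 10" for i j l k
    by (rule homog_poly_const_mult, rule homog_poly_mult[OF var[OF that(1)]
          homog_poly_mult[OF var[OF that(2)] var[OF that(3)]]]) auto
  have "homog_poly 10 3 (\<lambda>v. 12 * (v 1 * (v 1 * v 5)) + ((-6) * (v 0 * (v 1 * v 6)) + 2 * (v 0 * (v 0 * v 7))))"
    "homog_poly 10 3 (\<lambda>v. 6 * (v 1 * (v 1 * v 6)) + ((-8) * (v 0 * (v 1 * v 7)) + 6 * (v 0 * (v 0 * v 8))))"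
    "homog_poly 10 3 (\<lambda>v. 2 * (v 1 * (v 1 * v 7)) + ((-6) * (v 0 * (v 1 * v 8)) + 12 * (v 0 * (v 0 * v 9))))"
    by (intro homog_poly_add cubic; simp)+
  moreover have "cov0 = (\<lambda>v. 12 * (v 1 * (v 1 * v 5)) + ((-6) * (v 0 * (v 1 * v 6)) + 2 * (v 0 * (v 0 * v 7))))"
    "cov1 = (\<lambda>v. 6 * (v 1 * (v 1 * v 6)) + ((-8) * (v 0 * (v 1 * v 7)) + 6 * (v 0 * (v 0 * v 8))))"
    "cov2 = (\<lambda>v. 2 * (v 1 * (v 1 * v 7)) + ((-6) * (v 0 * (v 1 * v 8)) + 12 * (v 0 * (v 0 * v 9))))"
    by (auto simp: cov0_def cov1_def cov2_def power2_eq_square algebra_simps)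
  ultimately have "homog_poly 10 3 cov0" "homog_poly 10 3 cov1" "homog_poly 10 3 cov2"
    by simp_all
  hence "homog_poly 10 6 (\<lambda>v. cov1 v * cov1 v + (-4) * (cov0 v * cov2 v))"
    by (intro homog_poly_add homog_poly_const_mult homog_poly_mult) auto
  moreover have "Delta = (\<lambda>v. cov1 v * cov1 v + (-4) * (cov0 v * cov2 v))"
    by (auto simp: Delta_def power2_eq_square)
  ultimately show ?thesis by simp
qed

lemma Delta_in_inv_ring: "Delta \<in> inv_ring"
  unfolding inv_ring_def SL2_def using homog_poly_imp_poly_fun[OF homog_poly_Delta] Delta_invariant
  by auto

lemma Delta_p0: "Delta p0 = 576"
  by (simp add: Delta_def cov0_def cov1_def cov2_def p0_def)

section \<open>Invariants of degree 2 to 5 vanish at p0\<close>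

lemma primitive_root_of_unity:
  assumes "0 < n"
  shows "\<exists>w :: complex. w ^ n = 1 \<and> (\<forall>k. w ^ k = 1 \<longrightarrow> n dvd k)"
proof (intro exI conjI allI impI)
  let ?w = "cis (2 * pi / real n)"
  have pow: "?w ^ k = cis (2 * pi * real k / real n)" for k
    by (simp add: DeMoivre mult.commute)
  show "?w ^ n = 1" using assms by (simp add: pow)
  fix k assume "?w ^ k = 1"
  moreover have "?w ^ k = (?w ^ n) ^ (k div n) * ?w ^ (k mod n)"
    by (simp flip: power_mult power_add)
  ultimately have eq: "cis (2 * pi * real (k mod n) / real n) = cis (2 * pi * real 0 / real n)"
    using \<open>?w ^ n = 1\<close> by (simp add: pow)
  have inj: "inj_on (\<lambda>k. cis (2 * pi * real k / real n)) {..<n}"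
    using bij_betw_roots_unity[OF assms] by (rule bij_betw_imp_inj_on)
  have "k mod n = 0"
    by (rule inj_onD[OF inj eq]) (use assms in auto)
  thus "n dvd k" by (simp add: dvd_eq_mod_eq_0)
qed

text \<open>\<open>diag(t, 1/t)\<close> multiplies the coefficient of \<open>x^(k-j) y^j\<close> by \<open>t^(k-2j)\<close>.\<close>

definition torus_act :: "complex \<Rightarrow> (nat \<Rightarrow> complex) \<Rightarrow> (nat \<Rightarrow> complex)" where
  "torus_act t v = (\<lambda>k. if k = 0 then t * v 0 else if k = 1 then v 1 / t else if k = 2 then t^2 * v 2
     else if k = 3 then v 3 else if k = 4 then v 4 / t^2 else if k = 5 then t^4 * v 5
     else if k = 6 then t^2 * v 6 else if k = 7 then v 7 else if k = 8 then v 8 / t^2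
     else if k = 9 then v 9 / t^4 else v k)"

lemma act_rel_torus_act: "t \<noteq> 0 \<Longrightarrow> act_rel (t, 0, 0, 1/t) v (torus_act t v)"
  unfolding act_rel_def form1_def form2_def form4_def binform_1 binform_2 binform_4 torus_act_def
  by (simp add: field_simps power2_eq_square power3_eq_cube power4_eq_xxxx eval_nat_numeral)

lemma inv_ring_vanishes_if_torus_scales:
  assumes "f \<in> inv_ring" "homog_poly n d f"
    and "t \<noteq> 0" "torus_act t v = (\<lambda>k. t * v k)" "t ^ d \<noteq> 1"
  shows "f v = 0"
proof -
  have "f v = f (torus_act t v)"
    using inv_ring_invariant[OF assms(1) _ act_rel_torus_act[OF assms(3)]] assms(3) by simp
  also have "\<dots> = t ^ d * f v"
    using homog_poly_scale[OF assms(2)] assms(4) by simp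
  finally show ?thesis using assms(5) by (metis mult_cancel_right1)
qed

definition quartic_xy3 :: "nat \<Rightarrow> complex" where
  "quartic_xy3 = (\<lambda>k. if k = 8 then 1 else 0)"
definition quartic_y4 :: "nat \<Rightarrow> complex" where
  "quartic_y4 = (\<lambda>k. if k = 9 then 1 else 0)"
definition quartic_cx_y4 :: "complex \<Rightarrow> nat \<Rightarrow> complex" where
  "quartic_cx_y4 c = (\<lambda>k. if k = 5 then c^4 else if k = 6 then 4*c^3 else if k = 7 then 6*c^2
      else if k = 8 then 4*c else if k = 9 then 1 else 0)"

lemma p0_eq_x_plus: "p0 = x_plus quartic_xy3 4"
  by (auto simp: p0_def x_plus_def quartic_xy3_def)

lemma torus_act_x_plus_xy3:
  "t \<noteq> 0 \<Longrightarrow> torus_act t (x_plus quartic_xy3 u) = (\<lambda>k. t * x_plus quartic_xy3 (u / t^3) k)"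
  by (simp add: fun_eq_iff torus_act_def x_plus_def quartic_xy3_def field_simps
      power2_eq_square power3_eq_cube)

lemma torus_act_x_plus_y4:
  "t \<noteq> 0 \<Longrightarrow> torus_act t (x_plus quartic_y4 u) = (\<lambda>k. t * x_plus quartic_y4 (u / t^5) k)"
  by (simp add: fun_eq_iff torus_act_def x_plus_def quartic_y4_def field_simps
      power2_eq_square power3_eq_cube power4_eq_xxxx eval_nat_numeral)

lemma act_rel_shear_x_plus_y4: "act_rel (1, 0, c, 1) (x_plus quartic_y4 s) (x_plus (quartic_cx_y4 c) s)"
  unfolding act_rel_def form1_def form2_def form4_def binform_1 binform_2 binform_4
    x_plus_def quartic_y4_def quartic_cx_y4_def
  by (simp add: algebra_simps power2_eq_square power3_eq_cube power4_eq_xxxx eval_nat_numeral)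

lemma inv_ring_vanishes_at_p0_if_not_3_dvd:
  assumes "f \<in> inv_ring" "homog_poly n d f" "\<not> 3 dvd d"
  shows "f p0 = 0"
proof -
  obtain w :: complex where w: "w ^ 3 = 1" "\<forall>k. w ^ k = 1 \<longrightarrow> 3 dvd k"
    using primitive_root_of_unity[of 3] by auto
  hence "w \<noteq> 0" by auto
  have "4 / w^2 = w * 4"
    using w(1) \<open>w \<noteq> 0\<close> by (simp add: divide_eq_eq power3_eq_cube power2_eq_square mult.assoc)
  hence "torus_act w p0 = (\<lambda>k. w * p0 k)"
    by (simp add: fun_eq_iff torus_act_def p0_def)
  thus ?thesis
    using inv_ring_vanishes_if_torus_scales[OF assms(1,2) \<open>w \<noteq> 0\<close>] w(2) assms(3) by blast
qed

lemma inv_ring_deg3_linear_along_xy3: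
  assumes f: "f \<in> inv_ring" "homog_poly n 3 f"
  shows "f (x_plus quartic_xy3 s) = s * f (x_plus quartic_xy3 1)"
proof (cases "s = 0")
  case True
  have "(2::complex) ^ 3 \<noteq> 1" by simp
  thus ?thesis using inv_ring_vanishes_if_torus_scales[OF f, of 2] torus_act_x_plus_xy3[of 2 0] True
    by simp
next
  case False
  obtain t :: complex where t: "t ^ 3 = s" using nth_root_exists[of 3 s] by auto
  hence "t \<noteq> 0" using False by auto
  have "f (x_plus quartic_xy3 s) = f (torus_act t (x_plus quartic_xy3 s))"
    using inv_ring_invariant[OF f(1) _ act_rel_torus_act[OF \<open>t \<noteq> 0\<close>]] \<open>t \<noteq> 0\<close> by simp
  also have "\<dots> = s * f (x_plus quartic_xy3 1)"
    using homog_poly_scale[OF f(2)] torus_act_x_plus_xy3[OF \<open>t \<noteq> 0\<close>] t False by simp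
  finally show ?thesis .
qed

lemma inv_ring_deg3_vanishes_along_y4:
  assumes f: "f \<in> inv_ring" "homog_poly n 3 f"
  shows "f (x_plus quartic_y4 s) = 0"
proof -
  obtain t :: complex where t: "t ^ 5 = 1" "\<forall>k. t ^ k = 1 \<longrightarrow> 5 dvd k"
    using primitive_root_of_unity[of 5] by auto
  hence "t \<noteq> 0" by auto
  moreover have "torus_act t (x_plus quartic_y4 s) = (\<lambda>k. t * x_plus quartic_y4 s k)"
    using torus_act_x_plus_y4[OF \<open>t \<noteq> 0\<close>] t(1) by simp
  ultimately show ?thesis using inv_ring_vanishes_if_torus_scales[OF f] t(2) by fastforce
qed

lemma inv_ring_deg3_vanishes_at_p0:
  assumes f: "f \<in> inv_ring" "homog_poly 10 3 f"
  shows "f p0 = 0"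
proof -
  obtain L where L: "\<And>h. \<exists>p. (\<forall>s. f (x_plus h s) = poly p s) \<and> coeff p 1 = (\<Sum>i\<in>{1..<10}. L i * h i)"
    using poly_fun_along_x_plus[OF homog_poly_imp_poly_fun[OF f(2)]] by auto
  have "L 9 + 4 * L 8 * c + 6 * L 7 * c^2 + 4 * L 6 * c^3 + L 5 * c^4 = 0" for c
  proof -
    obtain p where p: "\<forall>s. f (x_plus (quartic_cx_y4 c) s) = poly p s"
      "coeff p 1 = (\<Sum>i\<in>{1..<10}. L i * quartic_cx_y4 c i)"
      using L by blast
    have "f (x_plus (quartic_cx_y4 c) s) = 0" for s
      using inv_ring_invariant[OF f(1) _ act_rel_shear_x_plus_y4] inv_ring_deg3_vanishes_along_y4[OF f]
      by simp
    hence "p = 0" using p(1) poly_all_0_iff_0[of p] by simp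
    thus ?thesis using p(2)
      by (simp add: quartic_cx_y4_def eval_nat_numeral atLeastLessThanSuc algebra_simps)
  qed
  moreover have "poly [:L 9, 4 * L 8, 6 * L 7, 4 * L 6, L 5:] c
      = L 9 + 4 * L 8 * c + 6 * L 7 * c^2 + 4 * L 6 * c^3 + L 5 * c^4" for c
    by (simp add: algebra_simps eval_nat_numeral)
  ultimately have "[:L 9, 4 * L 8, 6 * L 7, 4 * L 6, L 5:] = 0"
    using poly_all_0_iff_0 by metis
  hence "L 8 = 0" by simp
  moreover have "L 8 = f (x_plus quartic_xy3 1)"
  proof -
    define K where "K = f (x_plus quartic_xy3 1)"
    obtain p where p: "\<forall>s. f (x_plus quartic_xy3 s) = poly p s"
      "coeff p 1 = (\<Sum>i\<in>{1..<10}. L i * quartic_xy3 i)"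
      using L by blast
    have "poly p s = poly [:0, K:] s" for s
      using p(1) inv_ring_deg3_linear_along_xy3[OF f, of s] by (simp add: K_def)
    hence "p = [:0, K:]" using poly_eq_poly_eq_iff by blast
    thus ?thesis using p(2) by (simp add: K_def quartic_xy3_def eval_nat_numeral atLeastLessThanSuc)
  qed
  ultimately show ?thesis using inv_ring_deg3_linear_along_xy3[OF f, of 4] p0_eq_x_plus by simp
qed

lemma inv_ring_vanishes_at_p0:
  assumes f: "f \<in> inv_ring" "homog_poly 10 d f" and d: "2 \<le> d" "d \<le> 5"
  shows "f p0 = 0"
proof (cases "d = 3")
  case True
  thus ?thesis using inv_ring_deg3_vanishes_at_p0 f by simp
next
  case False
  with d have "d = 2 \<or> d = 4 \<or> d = 5" by auto
  hence "\<not> 3 dvd d" by auto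
  thus ?thesis using inv_ring_vanishes_at_p0_if_not_3_dvd[OF f] by blast
qed

lemma p0_not_in_nullcone: "p0 \<notin> nullcone"
proof
  assume "p0 \<in> nullcone"
  hence "\<forall>d>0. homog_poly 10 d Delta \<longrightarrow> Delta p0 = 0"
    using Delta_in_inv_ring unfolding nullcone_def by blast
  hence "Delta p0 = 0" using homog_poly_Delta zero_less_numeral by blast
  thus False using Delta_p0 by simp
qed

lemma hsop_elements_vanish_at_p0:
  assumes "is_hsop fs" "length fs = 7" "\<forall>i<7. homog_poly 10 ([2, 2, 3, 3, 3, 4, 5] ! i) (fs ! i)"
  shows "\<forall>g\<in>set fs. \<exists>d>0. homog_poly 10 d g \<and> g p0 = 0"
proof
  fix g assume "g \<in> set fs"
  then obtain i where i: "i < 7" "g = fs ! i" using assms(2) by (auto simp: in_set_conv_nth)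
  have "[2, 2, 3, 3, 3, 4, 5::nat] ! i \<in> {2..5}"
    using i(1) by (auto simp: less_Suc_eq nth_Cons split: nat.splits)
  moreover have "homog_poly 10 ([2, 2, 3, 3, 3, 4, 5] ! i) g" using assms(3) i by simp
  moreover have "g \<in> inv_ring" using assms(1) \<open>g \<in> set fs\<close> unfolding is_hsop_def by blast
  ultimately show "\<exists>d>0. homog_poly 10 d g \<and> g p0 = 0"
    using inv_ring_vanishes_at_p0 by (intro exI[of _ "[2, 2, 3, 3, 3, 4, 5] ! i"]) auto
qed

theorem mainTheorem8:
  shows "\<not> (\<exists>fs. length fs = 7 \<and> is_hsop fs
              \<and> (\<forall>i<7. homog_poly 10 ([2, 2, 3, 3, 3, 4, 5] ! i) (fs ! i)))
         \<and> (\<forall>d\<in>{2..5}. \<forall>f\<in>inv_ring. homog_poly 10 d f \<longrightarrow> f p0 = 0)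
         \<and> p0 \<notin> nullcone"
proof (intro conjI)
  show "\<not> (\<exists>fs. length fs = 7 \<and> is_hsop fs
              \<and> (\<forall>i<7. homog_poly 10 ([2, 2, 3, 3, 3, 4, 5] ! i) (fs ! i)))"
  proof
    assume "\<exists>fs. length fs = 7 \<and> is_hsop fs \<and> (\<forall>i<7. homog_poly 10 ([2, 2, 3, 3, 3, 4, 5] ! i) (fs ! i))"
    then obtain fs where fs: "length fs = 7" "is_hsop fs"
      "\<forall>i<7. homog_poly 10 ([2, 2, 3, 3, 3, 4, 5] ! i) (fs ! i)" by blast
    have "integral_over (gen_alg fs) Delta"
      using fs(2) Delta_in_inv_ring unfolding is_hsop_def by blast
    hence "Delta p0 = 0"
      using integral_over_gen_alg_vanishes[OF hsop_elements_vanish_at_p0[OF fs(2,1,3)] homog_poly_Delta]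
      by simp
    thus False using Delta_p0 by simp
  qed
  show "\<forall>d\<in>{2..5}. \<forall>f\<in>inv_ring. homog_poly 10 d f \<longrightarrow> f p0 = 0"
    using inv_ring_vanishes_at_p0 by auto
  show "p0 \<notin> nullcone" by (rule p0_not_in_nullcone)
qed

end
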